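(* Let $C,D$ be $\mathcal{FL}_{\bot\mathit{reg}}$ concept descriptions and $\mathcal T$ an $\mathcal{FL}_{\bot\mathit{reg}}$ TBox. Let $\Sigma_C\subseteq N_C$ and $\Sigma_R\subseteq N_R$ be the sets of all concept names, respectively role names, occurring in $C$, $D$ or $\mathcal T$, and let $B\in N_C\setminus\Sigma_C$ be a fresh concept name. For a concept description $K$ let $K^B$ be obtained from $K$ by replacing every occurrence of $\bot$ with $B$, and let $\mathcal T^B$ be obtained from $\mathcal T$ by replacing every occurrence of $\bot$ with $B$. Let $\mathcal R$ be the TBox consisting of the axioms $B\sqsubseteq A$ for every $A\in\Sigma_C$ and $B\sqsubseteq\forall r.B$ for every $r\in\Sigma_R$. Then $C\sqsubseteq_{\mathcal T}D$ holds if and only if $C^B\sqsubseteq_{\mathcal T^B\cup\mathcal R}D^B$ holds (the latter being an instance in $\mathcal{FL}_{\mathit{reg}}$).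
   Context: Let $N_C$ and $N_R$ be disjoint countably infinite sets of concept names and role names. Regular role expressions are generated by $E ::= \emptyset \mid \varepsilon \mid r \mid (E+E) \mid (EE) \mid E^{*}$ with $r\in N_R$, with languages $\mathcal L(E)\subseteq N_R^*$ defined as usual. $\mathcal{FL}_{\bot\mathit{reg}}$ concept descriptions are generated by $C ::= A \mid \top \mid \bot \mid (C\sqcap C) \mid \forall E.C$ with $A\in N_C$; $\mathcal{FL}_{\mathit{reg}}$ is the fragment without $\bot$. An interpretation $\mathcal I=(\Delta^{\mathcal I},\cdot^{\mathcal I})$ has nonempty domain, $A^{\mathcal I}\subseteq\Delta^{\mathcal I}$, $r^{\mathcal I}\subseteq(\Delta^{\mathcal I})^2$; $E^{\mathcal I}$ is the union over words $r_1\cdots r_n\in\mathcal L(E)$ of $r_1^{\mathcal I}\circ\cdots\circ r_n^{\mathcal I}$ (identity for the empty word); $\top^{\mathcal I}=\Delta^{\mathcal I}$, $\bot^{\mathcal I}=\emptyset$, $(C\sqcap D)^{\mathcal I}=C^{\mathcal I}\cap D^{\mathcal I}$, $(\forall E.C)^{\mathcal I}=\{x\mid y\in C^{\mathcal I}$ for all $y$ with $(x,y)\in E^{\mathcal I}\}$. A TBox is a finite set of axioms $K\sqsubseteq M$ between concept descriptions; $\mathcal I$ is a model of a TBox if $K^{\mathcal I}\subseteq M^{\mathcal I}$ for all its axioms; $C\sqsubseteq_{\mathcal T}D$ means $C^{\mathcal I}\subseteq D^{\mathcal I}$ for every model $\mathcal I$ of $\mathcal T$. *)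

theory Defs
  imports Main
begin

datatype 'r rexp = EmptyR | Eps | Role 'r | PlusR "'r rexp" "'r rexp"
  | TimesR "'r rexp" "'r rexp" | StarR "'r rexp"

inductive_set kleene :: "'a list set \<Rightarrow> 'a list set" for L where
  kleene_nil: "[] \<in> kleene L"
| kleene_app: "u \<in> L \<Longrightarrow> v \<in> kleene L \<Longrightarrow> u @ v \<in> kleene L"

fun lang :: "'r rexp \<Rightarrow> 'r list set" where
  "lang EmptyR = {}"
| "lang Eps = {[]}"
| "lang (Role r) = {[r]}"
| "lang (PlusR E F) = lang E \<union> lang F"
| "lang (TimesR E F) = {u @ v | u v. u \<in> lang E \<and> v \<in> lang F}"
| "lang (StarR E) = kleene (lang E)"

fun roles_rexp :: "'r rexp \<Rightarrow> 'r set" where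
  "roles_rexp EmptyR = {}"
| "roles_rexp Eps = {}"
| "roles_rexp (Role r) = {r}"
| "roles_rexp (PlusR E F) = roles_rexp E \<union> roles_rexp F"
| "roles_rexp (TimesR E F) = roles_rexp E \<union> roles_rexp F"
| "roles_rexp (StarR E) = roles_rexp E"

datatype ('c, 'r) concept = CName 'c | Top | Bot
  | Conj "('c, 'r) concept" "('c, 'r) concept"
  | All "'r rexp" "('c, 'r) concept"

fun cnames :: "('c, 'r) concept \<Rightarrow> 'c set" where
  "cnames (CName A) = {A}"
| "cnames Top = {}"
| "cnames Bot = {}"
| "cnames (Conj C D) = cnames C \<union> cnames D"
| "cnames (All E C) = cnames C"

fun rnames :: "('c, 'r) concept \<Rightarrow> 'r set" where
  "rnames (CName A) = {}"
| "rnames Top = {}"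
| "rnames Bot = {}"
| "rnames (Conj C D) = rnames C \<union> rnames D"
| "rnames (All E C) = roles_rexp E \<union> rnames C"

fun replBot :: "'c \<Rightarrow> ('c, 'r) concept \<Rightarrow> ('c, 'r) concept" where
  "replBot B (CName A) = CName A"
| "replBot B Top = Top"
| "replBot B Bot = CName B"
| "replBot B (Conj C D) = Conj (replBot B C) (replBot B D)"
| "replBot B (All E C) = All E (replBot B C)"

text \<open>A TBox is a finite set of axioms (K, M), meaning K below M.\<close>
type_synonym ('c, 'r) tbox = "(('c, 'r) concept \<times> ('c, 'r) concept) set"

definition tbox_cnames :: "('c, 'r) tbox \<Rightarrow> 'c set" where
  "tbox_cnames T = (\<Union>(K, M)\<in>T. cnames K \<union> cnames M)"

definition tbox_rnames :: "('c, 'r) tbox \<Rightarrow> 'r set" where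
  "tbox_rnames T = (\<Union>(K, M)\<in>T. rnames K \<union> rnames M)"

definition replBotT :: "'c \<Rightarrow> ('c, 'r) tbox \<Rightarrow> ('c, 'r) tbox" where
  "replBotT B T = (\<lambda>(K, M). (replBot B K, replBot B M)) ` T"

record ('d, 'c, 'r) interp =
  dom :: "'d set"
  cext :: "'c \<Rightarrow> 'd set"
  rext :: "'r \<Rightarrow> ('d \<times> 'd) set"

definition is_interp :: "('d, 'c, 'r) interp \<Rightarrow> bool" where
  "is_interp I \<longleftrightarrow> dom I \<noteq> {} \<and> (\<forall>A. cext I A \<subseteq> dom I) \<and>
     (\<forall>r. rext I r \<subseteq> dom I \<times> dom I)"

fun word_ext :: "('d, 'c, 'r) interp \<Rightarrow> 'r list \<Rightarrow> ('d \<times> 'd) set" where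
  "word_ext I [] = Id_on (dom I)"
| "word_ext I (r # w) = rext I r O word_ext I w"

definition rexp_ext :: "('d, 'c, 'r) interp \<Rightarrow> 'r rexp \<Rightarrow> ('d \<times> 'd) set" where
  "rexp_ext I E = (\<Union>w\<in>lang E. word_ext I w)"

fun cext_of :: "('d, 'c, 'r) interp \<Rightarrow> ('c, 'r) concept \<Rightarrow> 'd set" where
  "cext_of I (CName A) = cext I A"
| "cext_of I Top = dom I"
| "cext_of I Bot = {}"
| "cext_of I (Conj C D) = cext_of I C \<inter> cext_of I D"
| "cext_of I (All E C) = {x \<in> dom I. \<forall>y. (x, y) \<in> rexp_ext I E \<longrightarrow> y \<in> cext_of I C}"

definition is_model :: "('d, 'c, 'r) interp \<Rightarrow> ('c, 'r) tbox \<Rightarrow> bool" where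
  "is_model I T \<longleftrightarrow> is_interp I \<and> (\<forall>(K, M)\<in>T. cext_of I K \<subseteq> cext_of I M)"

definition subsumes :: "'d itself \<Rightarrow> ('c, 'r) concept \<Rightarrow> ('c, 'r) tbox \<Rightarrow> ('c, 'r) concept \<Rightarrow> bool" where
  "subsumes TYPE('d) C T D \<longleftrightarrow>
     (\<forall>I :: ('d, 'c, 'r) interp. is_model I T \<longrightarrow> cext_of I C \<subseteq> cext_of I D)"

end

theory Submission
  imports Defs
begin

text \<open>Both directions are model transformations that keep the domain type, and neither
needs \<open>T\<close> to be finite. Given a model of \<open>T\<close>, interpreting the fresh name \<open>B\<close> as the empty
set turns every \<open>K\<^sup>B\<close> into \<open>K\<close> and satisfies the axioms of \<open>\<R>\<close> trivially.
Conversely, in a model \<open>J\<close> of \<open>T\<^sup>B \<union> \<R>\<close> the set \<open>X = B\<^sup>J\<close> lies inside every concept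
name of the signature and is closed under all its roles. Deleting \<open>X\<close> from \<open>J\<close> gives an
interpretation \<open>J'\<close> with \<open>(K\<^sup>B)\<^sup>J = K\<^sup>J\<^sup>' \<union> X\<close> for every \<open>K\<close> over the signature, so \<open>J'\<close> is a
model of \<open>T\<close> and subsumptions transfer; if \<open>X\<close> is the whole domain, every \<open>K\<^sup>B\<close> is
interpreted as the whole domain.\<close>

definition role_closed :: "('d, 'c, 'r) interp \<Rightarrow> 'r set \<Rightarrow> 'd set \<Rightarrow> bool" where
  "role_closed I S X \<longleftrightarrow> (\<forall>r\<in>S. rext I r `` X \<subseteq> X)"

definition interp_minus :: "('d, 'c, 'r) interp \<Rightarrow> 'd set \<Rightarrow> ('d, 'c, 'r) interp" where
  "interp_minus I X = \<lparr>dom = dom I - X, cext = (\<lambda>A. cext I A - X),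
     rext = (\<lambda>r. rext I r \<inter> (- X) \<times> (- X))\<rparr>"

lemma dom_interp_minus [simp]: "dom (interp_minus I X) = dom I - X"
  by (simp add: interp_minus_def)

lemma cext_interp_minus [simp]: "cext (interp_minus I X) A = cext I A - X"
  by (simp add: interp_minus_def)

lemma lang_subset_lists_roles_rexp: "w \<in> lang E \<Longrightarrow> set w \<subseteq> roles_rexp E"
proof (induction E arbitrary: w)
  case (StarR E)
  from \<open>w \<in> lang (StarR E)\<close> have "w \<in> kleene (lang E)" by simp
  then show ?case
    by (induction rule: kleene.induct) (use StarR.IH in auto)
qed fastforce+

lemma cext_of_subset_dom: "is_interp I \<Longrightarrow> cext_of I K \<subseteq> dom I"
  by (induction K) (auto simp: is_interp_def)

lemma rexp_ext_Role: "is_interp I \<Longrightarrow> rexp_ext I (Role r) = rext I r"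
  by (fastforce simp: rexp_ext_def is_interp_def)

lemma role_closed_mono: "role_closed I S X \<Longrightarrow> S' \<subseteq> S \<Longrightarrow> role_closed I S' X"
  by (auto simp: role_closed_def)

lemma word_ext_Image_subset:
  "role_closed I S X \<Longrightarrow> set w \<subseteq> S \<Longrightarrow> word_ext I w `` X \<subseteq> X"
proof (induction w)
  case (Cons r w)
  have "word_ext I (r # w) `` X = word_ext I w `` (rext I r `` X)"
    by (simp add: relcomp_Image)
  also have "\<dots> \<subseteq> word_ext I w `` X"
    using Cons.prems by (intro Image_mono) (auto simp: role_closed_def)
  also have "\<dots> \<subseteq> X"
    using Cons by simp
  finally show ?case .
qed simp

lemma rexp_ext_Image_subset:
  assumes "role_closed I S X" and "roles_rexp E \<subseteq> S"
  shows "rexp_ext I E `` X \<subseteq> X"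
proof -
  have "word_ext I w `` X \<subseteq> X" if "w \<in> lang E" for w
    using lang_subset_lists_roles_rexp[OF that] assms(2)
    by (intro word_ext_Image_subset[OF assms(1)]) auto
  then show ?thesis
    unfolding rexp_ext_def by blast
qed

lemma word_ext_interp_minus:
  assumes "role_closed I (set w) X" and "x \<notin> X"
  shows "(x, y) \<in> word_ext (interp_minus I X) w \<longleftrightarrow> (x, y) \<in> word_ext I w \<and> y \<notin> X"
  using assms
proof (induction w arbitrary: x)
  case Nil
  then show ?case by (auto simp: interp_minus_def)
next
  case (Cons r w)
  have closed: "role_closed I (set w) X"
    using Cons.prems(1) by (rule role_closed_mono) auto
  show ?case
  proof
    assume "(x, y) \<in> word_ext (interp_minus I X) (r # w)"
    then obtain z where "(x, z) \<in> rext I r" "z \<notin> X" "(z, y) \<in> word_ext (interp_minus I X) w"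
      by (auto simp: interp_minus_def)
    then show "(x, y) \<in> word_ext I (r # w) \<and> y \<notin> X"
      using Cons.IH[OF closed] by auto
  next
    assume "(x, y) \<in> word_ext I (r # w) \<and> y \<notin> X"
    then obtain z where xz: "(x, z) \<in> rext I r" and zy: "(z, y) \<in> word_ext I w" and "y \<notin> X"
      by auto
    have "z \<notin> X"
      using word_ext_Image_subset[OF closed order_refl] zy \<open>y \<notin> X\<close> by blast
    then show "(x, y) \<in> word_ext (interp_minus I X) (r # w)"
      using xz zy \<open>y \<notin> X\<close> \<open>x \<notin> X\<close> Cons.IH[OF closed] by (auto simp: interp_minus_def)
  qed
qed

lemma rexp_ext_interp_minus:
  assumes "role_closed I (roles_rexp E) X" and "x \<notin> X"
  shows "(x, y) \<in> rexp_ext (interp_minus I X) E \<longleftrightarrow> (x, y) \<in> rexp_ext I E \<and> y \<notin> X"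
proof -
  have "(x, y) \<in> word_ext (interp_minus I X) w \<longleftrightarrow> (x, y) \<in> word_ext I w \<and> y \<notin> X"
    if "w \<in> lang E" for w
    using role_closed_mono[OF assms(1) lang_subset_lists_roles_rexp[OF that]] assms(2)
    by (rule word_ext_interp_minus)
  then show ?thesis
    unfolding rexp_ext_def by blast
qed

lemma cext_of_replBot_eq:
  assumes "is_interp I"
    and "\<forall>A\<in>cnames K. cext I B \<subseteq> cext I A"
    and "role_closed I (rnames K) (cext I B)"
  shows "cext_of I (replBot B K) = cext_of (interp_minus I (cext I B)) K \<union> cext I B"
  using assms(2,3)
proof (induction K)
  case (Conj K1 K2)
  have "cext_of I (replBot B K1) = cext_of (interp_minus I (cext I B)) K1 \<union> cext I B"
    and "cext_of I (replBot B K2) = cext_of (interp_minus I (cext I B)) K2 \<union> cext I B"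
    using Conj.prems role_closed_mono by (intro Conj.IH; fastforce)+
  then show ?case
    by auto
next
  case (All E K)
  let ?X = "cext I B" and ?I' = "interp_minus I (cext I B)"
  have closed_E: "role_closed I (roles_rexp E) ?X"
    using All.prems(2) by (rule role_closed_mono) simp
  have IH: "cext_of I (replBot B K) = cext_of ?I' K \<union> ?X"
    using All.prems(1) role_closed_mono[OF All.prems(2)] by (intro All.IH) auto
  have "?X \<subseteq> dom I"
    using assms(1) by (auto simp: is_interp_def)
  moreover have "rexp_ext I E `` ?X \<subseteq> ?X"
    using rexp_ext_Image_subset[OF closed_E order_refl] .
  ultimately show ?case
    using IH rexp_ext_interp_minus[OF closed_E] by auto
qed (use assms(1) in \<open>auto simp: is_interp_def\<close>)

lemma word_ext_cext_update: "word_ext (I\<lparr>cext := f\<rparr>) w = word_ext I w"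
  by (induction w) simp_all

lemma cext_of_replBot_fresh:
  "B \<notin> cnames K \<Longrightarrow> cext_of (I\<lparr>cext := (cext I)(B := {})\<rparr>) (replBot B K) = cext_of I K"
  by (induction K) (simp_all add: rexp_ext_def word_ext_cext_update)

lemma is_model_axiom: "is_model I T \<Longrightarrow> (K, M) \<in> T \<Longrightarrow> cext_of I K \<subseteq> cext_of I M"
  by (auto simp: is_model_def)

lemma is_model_Un: "is_model I (T \<union> U) \<longleftrightarrow> is_model I T \<and> is_model I U"
  by (auto simp: is_model_def)

definition bot_tbox :: "'c \<Rightarrow> 'c set \<Rightarrow> 'r set \<Rightarrow> ('c, 'r) tbox" where
  "bot_tbox B SC SR = {(CName B, CName A) | A. A \<in> SC} \<union>
     {(CName B, All (Role r) (CName B)) | r. r \<in> SR}"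

lemma is_model_bot_tbox_iff:
  "is_model I (bot_tbox B SC SR) \<longleftrightarrow>
     is_interp I \<and> (\<forall>A\<in>SC. cext I B \<subseteq> cext I A) \<and> role_closed I SR (cext I B)"
proof -
  have "is_model I (bot_tbox B SC SR) \<longleftrightarrow> is_interp I \<and> (\<forall>A\<in>SC. cext I B \<subseteq> cext I A) \<and>
      (\<forall>r\<in>SR. cext I B \<subseteq> cext_of I (All (Role r) (CName B)))"
    unfolding is_model_def bot_tbox_def
    by (simp add: ball_Un setcompr_eq_image del: cext_of.simps) simp
  moreover have "cext I B \<subseteq> cext_of I (All (Role r) (CName B)) \<longleftrightarrow> rext I r `` cext I B \<subseteq> cext I B"
    if "is_interp I" for r
    using that by (auto simp: rexp_ext_Role is_interp_def)
  ultimately show ?thesis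
    unfolding role_closed_def by blast
qed

lemma is_model_replBotT_fresh:
  assumes "is_model I T" and "B \<notin> tbox_cnames T"
  shows "is_model (I\<lparr>cext := (cext I)(B := {})\<rparr>) (replBotT B T)"
proof -
  let ?J = "I\<lparr>cext := (cext I)(B := {})\<rparr>"
  have "is_interp ?J"
    using assms(1) by (auto simp: is_model_def is_interp_def)
  moreover have "cext_of ?J (replBot B K) \<subseteq> cext_of ?J (replBot B M)" if "(K, M) \<in> T" for K M
  proof -
    have "B \<notin> cnames K" and "B \<notin> cnames M"
      using that assms(2) by (auto simp: tbox_cnames_def)
    with is_model_axiom[OF assms(1) that] show ?thesis
      by (simp add: cext_of_replBot_fresh)
  qed
  ultimately show ?thesis
    by (auto simp: is_model_def replBotT_def)
qed

lemma is_model_interp_minus: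
  assumes model: "is_model J (replBotT B T)"
    and nonempty: "\<not> dom J \<subseteq> cext J B"
    and below: "\<forall>A\<in>tbox_cnames T. cext J B \<subseteq> cext J A"
    and closed: "role_closed J (tbox_rnames T) (cext J B)"
  shows "is_model (interp_minus J (cext J B)) T"
proof -
  let ?X = "cext J B" and ?I = "interp_minus J (cext J B)"
  have J: "is_interp J"
    using model by (simp add: is_model_def)
  then have I: "is_interp ?I"
    using nonempty by (auto simp: is_interp_def interp_minus_def)
  have "cext_of ?I K \<subseteq> cext_of ?I M" if "(K, M) \<in> T" for K M
  proof -
    have eq: "cext_of J (replBot B K') = cext_of ?I K' \<union> ?X" if "K' \<in> {K, M}" for K'
      using \<open>(K, M) \<in> T\<close> that below closed
      by (intro cext_of_replBot_eq[OF J]) (auto simp: tbox_cnames_def tbox_rnames_def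
          intro: role_closed_mono)
    have "cext_of J (replBot B K) \<subseteq> cext_of J (replBot B M)"
      using \<open>(K, M) \<in> T\<close> by (intro is_model_axiom[OF model]) (auto simp: replBotT_def)
    moreover have "cext_of ?I K \<inter> ?X = {}"
      using cext_of_subset_dom[OF I] by auto
    ultimately show ?thesis
      using eq by blast
  qed
  with I show ?thesis
    by (auto simp: is_model_def)
qed

lemma subsumes_replBot_if_subsumes:
  fixes C D :: "('c, 'r) concept"
  assumes sub: "subsumes TYPE('d) C T D"
    and SC: "cnames C \<union> cnames D \<union> tbox_cnames T \<subseteq> SC"
    and SR: "rnames C \<union> rnames D \<union> tbox_rnames T \<subseteq> SR"
  shows "subsumes TYPE('d) (replBot B C) (replBotT B T \<union> bot_tbox B SC SR) (replBot B D)"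
  unfolding subsumes_def
proof (intro allI impI)
  fix J :: "('d, 'c, 'r) interp"
  assume "is_model J (replBotT B T \<union> bot_tbox B SC SR)"
  then have model: "is_model J (replBotT B T)" and J: "is_interp J"
    and below: "\<forall>A\<in>SC. cext J B \<subseteq> cext J A" and closed: "role_closed J SR (cext J B)"
    by (simp_all add: is_model_Un is_model_bot_tbox_iff)
  let ?X = "cext J B" and ?I = "interp_minus J (cext J B)"
  have eq: "cext_of J (replBot B K) = cext_of ?I K \<union> ?X" if "K \<in> {C, D}" for K
    using that SC SR below closed
    by (intro cext_of_replBot_eq[OF J]) (auto intro: role_closed_mono)
  show "cext_of J (replBot B C) \<subseteq> cext_of J (replBot B D)"
  proof (cases "dom J \<subseteq> ?X")
    case True
    then show ?thesis
      using eq cext_of_subset_dom[OF J, of "replBot B C"] by blast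
  next
    case False
    have "is_model ?I T"
      using model False SC SR below closed
      by (intro is_model_interp_minus) (auto intro: role_closed_mono)
    with sub have "cext_of ?I C \<subseteq> cext_of ?I D"
      by (simp add: subsumes_def)
    then show ?thesis
      using eq by blast
  qed
qed

lemma subsumes_if_subsumes_replBot:
  fixes C D :: "('c, 'r) concept"
  assumes sub: "subsumes TYPE('d) (replBot B C) (replBotT B T \<union> bot_tbox B SC SR) (replBot B D)"
    and fresh: "B \<notin> cnames C \<union> cnames D \<union> tbox_cnames T"
  shows "subsumes TYPE('d) C T D"
  unfolding subsumes_def
proof (intro allI impI)
  fix I :: "('d, 'c, 'r) interp"
  assume model: "is_model I T"
  let ?J = "I\<lparr>cext := (cext I)(B := {})\<rparr>"
  have "is_model ?J (replBotT B T)"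
    using model fresh by (intro is_model_replBotT_fresh) auto
  moreover have "is_interp ?J"
    using model by (auto simp: is_model_def is_interp_def)
  ultimately have "is_model ?J (replBotT B T \<union> bot_tbox B SC SR)"
    by (simp add: is_model_Un is_model_bot_tbox_iff role_closed_def)
  with sub have "cext_of ?J (replBot B C) \<subseteq> cext_of ?J (replBot B D)"
    by (simp add: subsumes_def)
  with fresh show "cext_of I C \<subseteq> cext_of I D"
    by (simp add: cext_of_replBot_fresh)
qed

theorem theorem2:
  fixes C D :: "('c, 'r) concept" and T :: "('c, 'r) tbox" and B :: 'c
    and SigC :: "'c set" and SigR :: "'r set" and R :: "('c, 'r) tbox"
  assumes "finite T"
    and "SigC = cnames C \<union> cnames D \<union> tbox_cnames T"
    and "SigR = rnames C \<union> rnames D \<union> tbox_rnames T"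
    and "B \<notin> SigC"
    and "R = {(CName B, CName A) | A. A \<in> SigC} \<union>
             {(CName B, All (Role r) (CName B)) | r. r \<in> SigR}"
  shows "subsumes TYPE('d) C T D \<longleftrightarrow>
         subsumes TYPE('d) (replBot B C) (replBotT B T \<union> R) (replBot B D)"
proof -
  have "R = bot_tbox B SigC SigR"
    using assms(5) by (simp add: bot_tbox_def)
  then show ?thesis
    using subsumes_replBot_if_subsumes[of C T D SigC SigR B]
      subsumes_if_subsumes_replBot[of B C T SigC SigR D] assms(2-4)
    by blast
qed

end
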